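(* Let $n\ge 0$ and $k$ be integers, $\rho\ne0$ real and $0\le q<1$. Writing $B_{n,\rho,q}^{(k)}=B_{n,\rho,q}^{(k)}(0)$, we have $$B_{n,\rho,q}^{(k)}=\sum_{m=0}^n S_2(n,m)\frac{(-\rho)^{n-m}\,m!}{[m+1]_q^k},$$ where $S_2(n,m)$ are the Stirling numbers of the second kind.
   Context: For real $0\le q<1$ (with $0^0=1$), $[x]_q=\frac{1-q^x}{1-q}$. ${\rm Li}_{k,q}(w)=\sum_{m\ge1} w^m/[m]_q^k$. The $q$-poly-Bernoulli polynomials with parameter $\rho$ are defined by the formal power series identity in $t$: $\frac{\rho}{1-e^{-\rho t}}{\rm Li}_{k,q}\left(\frac{1-e^{-\rho t}}{\rho}\right)e^{-tz}=\sum_{n\ge0} B_{n,\rho,q}^{(k)}(z)\frac{t^n}{n!}$. *)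

theory Defs
  imports Complex_Main "HOL-Computational_Algebra.Formal_Power_Series" "HOL-Combinatorics.Stirling"
begin

definition qnum :: "real \<Rightarrow> nat \<Rightarrow> real" where
  "qnum q x = (1 - q ^ x) / (1 - q)"

definition qLi :: "int \<Rightarrow> real \<Rightarrow> real fps" where
  "qLi k q = Abs_fps (\<lambda>m. if m = 0 then 0 else 1 / (qnum q m) powi k)"

definition qpb_u :: "real \<Rightarrow> real fps" where
  "qpb_u \<rho> = fps_const (1 / \<rho>) * (1 - fps_exp (- \<rho>))"

text \<open>Generating function rho/(1-e^{-rho t}) Li_{k,q}((1-e^{-rho t})/rho) e^{-tz},
  written as Li(u)/u * e^{-tz}; the division is exact in the fps ring since u has
  subdegree 1 and Li(u) is divisible by u.\<close>
definition qpb_gen :: "int \<Rightarrow> real \<Rightarrow> real \<Rightarrow> real \<Rightarrow> real fps" where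
  "qpb_gen k \<rho> q z = ((qLi k q oo qpb_u \<rho>) / qpb_u \<rho>) * fps_exp (- z)"

definition qpolyBernoulli :: "nat \<Rightarrow> int \<Rightarrow> real \<Rightarrow> real \<Rightarrow> real \<Rightarrow> real" where
  "qpolyBernoulli n k \<rho> q z = fact n * fps_nth (qpb_gen k \<rho> q z) n"

end

theory Submission
  imports Defs
begin

(* Write u = (1 - e^(-\<rho> t))/\<rho>. Since u' = 1 - \<rho> u, the coefficients of u^m/m! satisfy
   the recurrence of the Stirling numbers of the second kind, so that
   u^m/m! = sum_n S2(n,m) (-\<rho>)^(n-m) t^n/n!, a \<rho>-deformation of (e^t - 1)^m/m!.
   On the other hand Li_{k,q}(u)/u = sum_m u^m/[m+1]_q^k, and comparing coefficients of t^n
   gives the formula. *)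

unbundle fps_syntax

lemma qpb_u_nth_0 [simp]: "qpb_u \<rho> $ 0 = 0"
  by (simp add: qpb_u_def)

lemma qpb_u_nth_1: "\<rho> \<noteq> 0 \<Longrightarrow> qpb_u \<rho> $ 1 = 1"
  by (simp add: qpb_u_def fps_exp_def)

lemma fps_deriv_qpb_u:
  assumes "\<rho> \<noteq> 0"
  shows "fps_deriv (qpb_u \<rho>) = 1 - fps_const \<rho> * qpb_u \<rho>"
proof -
  have inv: "fps_const (1/\<rho>) * fps_const \<rho> = (1::real fps)"
    by (subst fps_const_mult) (simp add: assms)
  have "fps_deriv (qpb_u \<rho>) = fps_const (1/\<rho>) * fps_const \<rho> * fps_exp (- \<rho>)"
    by (simp add: qpb_u_def mult.assoc flip: fps_const_neg)
  also have "\<dots> = fps_exp (- \<rho>)"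
    by (simp add: inv assms)
  also have "\<dots> = 1 - fps_const \<rho> * qpb_u \<rho>"
    by (simp add: qpb_u_def mult.assoc[symmetric] mult.commute[of "fps_const \<rho>"] inv)
  finally show ?thesis .
qed

(* Coefficient form of (u^(m+1))' = (m+1) u^m (1 - \<rho> u). *)
lemma qpb_u_power_nth_Suc:
  assumes "\<rho> \<noteq> 0"
  shows "real (n+1) * (qpb_u \<rho> ^ Suc m) $ (n+1)
     = real (m+1) * ((qpb_u \<rho> ^ m) $ n - \<rho> * (qpb_u \<rho> ^ Suc m) $ n)"
proof -
  have "fps_deriv (qpb_u \<rho> ^ Suc m)
      = of_nat (Suc m) * (1 - fps_const \<rho> * qpb_u \<rho>) * qpb_u \<rho> ^ m"
    by (subst fps_deriv_power') (simp add: fps_deriv_qpb_u[OF assms] del: power_Suc)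
  also have "\<dots> = of_nat (Suc m) * (qpb_u \<rho> ^ m - fps_const \<rho> * qpb_u \<rho> ^ Suc m)"
    by (simp add: algebra_simps)
  finally have "fps_deriv (qpb_u \<rho> ^ Suc m)
      = of_nat (Suc m) * (qpb_u \<rho> ^ m - fps_const \<rho> * qpb_u \<rho> ^ Suc m)" .
  from arg_cong[where f="\<lambda>f. f $ n", OF this] show ?thesis
    unfolding fps_deriv_nth by (simp add: fps_of_nat[symmetric] algebra_simps del: of_nat_Suc power_Suc)
qed

lemma qpb_u_power_nth:
  assumes "\<rho> \<noteq> 0"
  shows "(qpb_u \<rho> ^ m) $ n = fact m * real (Stirling n m) * (- \<rho>) ^ n / ((- \<rho>) ^ m * fact n)"
proof (induction m arbitrary: n)
  case 0
  then show ?case by (cases n) auto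
next
  case (Suc m)
  show ?case
  proof (induction n)
    case 0
    then show ?case by (simp add: startsby_zero_power_prefix)
  next
    case (Suc n)
    have Stirling_Suc: "real (Stirling (Suc n) (Suc m))
        = real (Suc m) * real (Stirling n (Suc m)) + real (Stirling n m)"
      by (simp add: algebra_simps)
    have "(qpb_u \<rho> ^ Suc m) $ (n+1)
        = real (m+1) * ((qpb_u \<rho> ^ m) $ n - \<rho> * (qpb_u \<rho> ^ Suc m) $ n) / real (n+1)"
      using qpb_u_power_nth_Suc[OF assms, of n m] by (simp add: field_simps del: of_nat_Suc)
    also have "\<dots> = fact (Suc m) * real (Stirling (Suc n) (Suc m)) * (- \<rho>) ^ Suc n
                      / ((- \<rho>) ^ Suc m * fact (Suc n))"
      unfolding Stirling_Suc Suc.IH \<open>\<And>n. (qpb_u \<rho> ^ m) $ n = _\<close> using assms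
      by (simp add: divide_simps power_Suc del: of_nat_Suc) (simp add: algebra_simps)
    finally show ?case by simp
  qed
qed

lemma fact_mult_qpb_u_power_nth:
  assumes "\<rho> \<noteq> 0" and "m \<le> n"
  shows "fact n * (qpb_u \<rho> ^ m) $ n = fact m * real (Stirling n m) * (- \<rho>) ^ (n - m)"
proof -
  have "(- \<rho>) ^ n = (- \<rho>) ^ (n - m) * (- \<rho>) ^ m"
    using assms(2) by (simp flip: power_add)
  then show ?thesis
    using assms(1) by (simp add: qpb_u_power_nth field_simps)
qed

lemma qLi_eq_X_times:
  "qLi k q = fps_X * Abs_fps (\<lambda>m. 1 / qnum q (m + 1) powi k)"
  by (simp add: fps_eq_iff qLi_def)

lemma qpb_gen_0:
  assumes "\<rho> \<noteq> 0"
  shows "qpb_gen k \<rho> q 0 = Abs_fps (\<lambda>m. 1 / qnum q (m + 1) powi k) oo qpb_u \<rho>"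
proof -
  have "qpb_u \<rho> \<noteq> 0"
    using qpb_u_nth_1[OF assms] by auto
  then show ?thesis
    by (simp add: qpb_gen_def qLi_eq_X_times fps_compose_mult_distrib)
qed

theorem corollary1:
  fixes n :: nat and k :: int and \<rho> q :: real
  assumes "\<rho> \<noteq> 0" and "0 \<le> q" and "q < 1"
  shows "qpolyBernoulli n k \<rho> q 0 =
    (\<Sum>m = 0..n. real (Stirling n m) * (- \<rho>) ^ (n - m) * fact m / (qnum q (m + 1)) powi k)"
proof -
  have "qpolyBernoulli n k \<rho> q 0
      = (\<Sum>m = 0..n. fact n * (qpb_u \<rho> ^ m) $ n / qnum q (m + 1) powi k)"
    by (simp add: qpolyBernoulli_def qpb_gen_0[OF assms(1)] fps_compose_nth sum_distrib_left)
  also have "\<dots> = (\<Sum>m = 0..n. real (Stirling n m) * (- \<rho>) ^ (n - m) * fact m / (qnum q (m + 1)) powi k)"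
    by (rule sum.cong) (simp_all add: fact_mult_qpb_u_power_nth[OF assms(1)] mult_ac)
  finally show ?thesis .
qed

end
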